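(* For every deterministic parity automaton $\mathcal{A}=(Q,Q_0,\delta,\mu)$ with $m$ colors over a finite alphabet $\Sigma$, every bound $n\in\mathbb{N}$ and every $m'$ with $0<m'<m$, there is a deterministic parity automaton $\mathcal{A}'$ with $m'$ colors and $(n\cdot|Q|+1)\cdot|Q|\cdot(m-m'+2)$ states such that $L(\mathcal{A}')\subseteq L(\mathcal{A})$ and $L_n(L(\mathcal{A}'))=L_n(L(\mathcal{A}))$.
   Context: A lasso of length $n$ is a pair $(u,v)$ with $u\in\Sigma^*$, $v\in\Sigma^+$, $|u\cdot v|=n$, inducing $u\cdot v^\omega$. For $\psi\subseteq\Sigma^\omega$, $L_n(\psi)=\{u\cdot v^\omega \in \psi \mid u\in\Sigma^*, v\in\Sigma^+, |u\cdot v|=n\}$. A parity automaton is $(Q,Q_0,\delta,\mu)$ with finite $Q$, $Q_0\subseteq Q$, $\delta:Q\times\Sigma\to\mathcal{P}(Q)$, coloring $\mu$; "with $m$ colors" means $\mu:Q\to\{0,\dots,m-1\}$. A run on $\alpha_1\alpha_2\cdots$ is $q_0q_1\cdots$ with $q_0\in Q_0$ and $q_{i+1}\in\delta(q_i,\alpha_{i+1})$; it is accepting if the highest color occurring infinitely often along it is even; $L(\cdot)$ is the set of words with an accepting run. Deterministic means $|Q_0|=1$ and $|\delta(q,\alpha)|\le1$ for all $q,\alpha$ (missing successors allowed). *)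

theory Defs
  imports Main "HOL-Library.Omega_Words_Fun"
begin

record ('q, 'a) pa =
  states :: "'q set"
  init   :: "'q set"
  trans  :: "'q \<Rightarrow> 'a \<Rightarrow> 'q set"
  color  :: "'q \<Rightarrow> nat"

definition parity_automaton :: "('q, 'a) pa \<Rightarrow> nat \<Rightarrow> bool" where
  "parity_automaton A m \<longleftrightarrow>
     finite (states A) \<and> init A \<subseteq> states A \<and>
     (\<forall>q\<in>states A. \<forall>a. trans A q a \<subseteq> states A) \<and>
     (\<forall>q\<in>states A. color A q < m)"

definition deterministic :: "('q, 'a) pa \<Rightarrow> bool" where
  "deterministic A \<longleftrightarrow>
     card (init A) = 1 \<and> (\<forall>q\<in>states A. \<forall>a. card (trans A q a) \<le> 1)"

text \<open>Run on the word w = w 0, w 1, ... (w i is the letter alpha_(i+1)).\<close>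
definition is_run :: "('q, 'a) pa \<Rightarrow> 'a word \<Rightarrow> 'q word \<Rightarrow> bool" where
  "is_run A w r \<longleftrightarrow> r 0 \<in> init A \<and> (\<forall>i. r (Suc i) \<in> trans A (r i) (w i))"

definition accepting :: "('q, 'a) pa \<Rightarrow> 'q word \<Rightarrow> bool" where
  "accepting A r \<longleftrightarrow> even (Max {c. \<exists>\<^sub>\<infinity>i. color A (r i) = c})"

definition lang :: "('q, 'a) pa \<Rightarrow> 'a word set" where
  "lang A = {w. \<exists>r. is_run A w r \<and> accepting A r}"

definition lasso_lang :: "nat \<Rightarrow> 'a word set \<Rightarrow> 'a word set" where
  "lasso_lang n \<psi> = {w \<in> \<psi>. \<exists>u v. v \<noteq> [] \<and> length (u @ v) = n \<and> w = u \<frown> v\<^sup>\<omega>}"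

end

theory Submission
  imports Defs
begin

text \<open>
  Put \<open>L = n |Q| + 1\<close> and let \<open>e\<close> be the largest even colour below \<open>m'\<close>. On a lasso
  \<open>u v\<^sup>\<omega>\<close> of length \<open>n\<close> the run of the deterministic automaton is periodic with some
  period \<open>P\<close> from some position \<open>t0\<close> on, where \<open>t0 + P \<le> n |Q| < L\<close> (pigeonhole on the
  states at the positions \<open>|u| + i |v|\<close>, \<open>i \<le> |Q|\<close>). So every window
  \<open>[qL, qL + L - 1]\<close> with \<open>q \<ge> 1\<close> contains a full period, and the largest colour in it
  is the largest colour occurring infinitely often.

  The new automaton runs \<open>A\<close> together with a monitor that stores the position in the current
  window and the maximum of \<open>e\<close> and the colours seen in it. The run is killed when a window
  other than the first ends with an odd maximum, and the colour \<open>c\<close> is replaced by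
  \<open>min c e\<close>. On a surviving run whose largest recurring colour is above \<open>e\<close>, some late
  window has exactly that colour as its maximum, so the colour is even; hence the new language
  is contained in \<open>L(A)\<close>. On accepted lassos of length \<open>n\<close> every checked window has an
  even maximum, so they are still accepted. The states \<open>Q \<times> {..<L} \<times> {e..m-1}\<close> are
  finally renamed into natural numbers and padded with unreachable states to the exact count.
\<close>

section \<open>Limit sets of eventually periodic words\<close>

lemma limit_comp_finite_range:
  assumes "finite (range w)"
  shows "limit (f \<circ> w) = f ` limit w"
proof
  obtain k where k: "limit w = range (suffix k w)"
    using limit_is_suffix[OF assms] by blast
  have "limit (f \<circ> w) \<subseteq> range (suffix k (f \<circ> w))"
    by (rule limit_in_range_suffix)
  also have "suffix k (f \<circ> w) = f \<circ> suffix k w"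
    by (simp add: suffix_def comp_def)
  finally show "limit (f \<circ> w) \<subseteq> f ` limit w"
    unfolding k image_comp .
  show "f ` limit w \<subseteq> limit (f \<circ> w)"
    by (auto intro: limit_o)
qed

lemma finite_range_bounded:
  fixes w :: "nat word"
  assumes "\<And>i. w i \<le> b"
  shows "finite (range w)"
  using assms by (intro finite_subset[OF _ finite_atMost[of b]]) auto

lemma finite_limit: "finite (range w) \<Longrightarrow> finite (limit w)"
  using limit_in_range by (rule finite_subset)

lemma limit_not_empty: "finite (range w) \<Longrightarrow> limit w \<noteq> {}"
  using limit_nonempty by blast

lemma Max_limit_in: "finite (range w) \<Longrightarrow> Max (limit w) \<in> limit w"
  by (intro Max_in finite_limit limit_not_empty)

lemma Max_limit_le:
  fixes w :: "nat word"
  assumes "\<And>i. w i \<le> b"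
  shows "Max (limit w) \<le> b"
proof -
  have "Max (limit w) \<in> range w"
    using limit_in_range Max_limit_in[OF finite_range_bounded[OF assms]] by (rule subsetD)
  then show ?thesis
    using assms by auto
qed

lemma eventually_in_limit:
  assumes "finite (range w)"
  obtains k where "\<And>i. k \<le> i \<Longrightarrow> w i \<in> limit w"
proof -
  obtain k where "limit w = range (suffix k w)"
    using limit_is_suffix[OF assms] by blast
  then have "w i \<in> limit w" if "k \<le> i" for i
    using that rangeI[of "suffix k w" "i - k"] by simp
  then show ?thesis
    using that by blast
qed

lemma Max_limit_comp_mono:
  fixes w :: "'a::linorder word" and f :: "'a \<Rightarrow> 'b::linorder"
  assumes "finite (range w)" "mono f"
  shows "Max (limit (f \<circ> w)) = f (Max (limit w))"
  using mono_Max_commute[OF assms(2) finite_limit[OF assms(1)] limit_not_empty[OF assms(1)]]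
  unfolding limit_comp_finite_range[OF assms(1)] by simp

definition periodic_from :: "nat \<Rightarrow> nat \<Rightarrow> 'a word \<Rightarrow> bool" where
  "periodic_from t0 P w \<longleftrightarrow> (\<forall>i\<ge>t0. w (i + P) = w i)"

lemma periodic_from_mult:
  assumes "periodic_from t0 P w" "t0 \<le> i"
  shows "w (i + k * P) = w i"
proof (induction k)
  case (Suc k)
  have "w (i + Suc k * P) = w ((i + k * P) + P)"
    by (simp add: algebra_simps)
  also have "\<dots> = w (i + k * P)"
    using assms unfolding periodic_from_def by simp
  finally show ?case
    using Suc by simp
qed simp

lemma periodic_from_mult_period:
  assumes "periodic_from t0 P w" "t0 \<le> t1"
  shows "periodic_from t1 (k * P) w"
  unfolding periodic_from_def
proof (intro allI impI)
  fix i
  assume "t1 \<le> i"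
  then show "w (i + k * P) = w i"
    using assms(2) by (intro periodic_from_mult[OF assms(1)]) simp
qed

lemma periodic_from_mod:
  assumes "periodic_from t0 P w" "t0 \<le> a" "0 < P"
  shows "w (a + i) = w (a + i mod P)"
proof -
  have "w (a + i mod P + i div P * P) = w (a + i mod P)"
    using assms(2) by (intro periodic_from_mult[OF assms(1)]) simp
  then show ?thesis
    by (simp add: add.assoc)
qed

lemma periodic_from_comp: "periodic_from t0 P w \<Longrightarrow> periodic_from t0 P (f \<circ> w)"
  unfolding periodic_from_def by simp

lemma periodic_from_lasso:
  assumes "v \<noteq> []"
  shows "periodic_from (length u) (length v) (u \<frown> v\<^sup>\<omega>)"
  unfolding periodic_from_def
proof (intro allI impI)
  fix i
  assume "length u \<le> i"
  then have "(i + length v - length u) mod length v = (i - length u) mod length v"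
    by (metis Nat.add_diff_assoc2 mod_add_self2)
  then show "(u \<frown> v\<^sup>\<omega>) (i + length v) = (u \<frown> v\<^sup>\<omega>) i"
    using assms \<open>length u \<le> i\<close> by simp
qed

lemma limit_periodic_from:
  assumes "periodic_from t0 P w" "0 < P" "t0 \<le> a"
  shows "limit w = w ` {a..<a + P}"
proof -
  have "suffix a w = (w [a \<rightarrow> a + P])\<^sup>\<omega>"
  proof
    fix i
    show "suffix a w i = (w [a \<rightarrow> a + P])\<^sup>\<omega> i"
      using periodic_from_mod[OF assms(1,3,2), of i] assms(2) by simp
  qed
  then have "limit (suffix a w) = set (w [a \<rightarrow> a + P])"
    using assms(2) by simp
  then show ?thesis
    by simp
qed

lemma periodic_from_in_limit:
  assumes "periodic_from t0 P w" "0 < P" "t0 \<le> i"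
  shows "w i \<in> limit w"
  unfolding limit_periodic_from[OF assms] using assms(2) by simp

section \<open>Runs of deterministic automata on lassos\<close>

lemma accepting_iff_Max_limit:
  "accepting A r \<longleftrightarrow> even (Max (limit (color A \<circ> r)))"
  unfolding accepting_def limit_def by simp

lemma run_in_states:
  assumes "parity_automaton A m" "is_run A w r"
  shows "r i \<in> states A"
proof (induction i)
  case 0
  then show ?case
    using assms unfolding parity_automaton_def is_run_def by blast
next
  case (Suc i)
  have "r (Suc i) \<in> trans A (r i) (w i)"
    using assms(2) unfolding is_run_def by blast
  then show ?case
    using Suc assms(1) unfolding parity_automaton_def by blast
qed

lemma run_color_less:
  "parity_automaton A m \<Longrightarrow> is_run A w r \<Longrightarrow> color A (r i) < m"
  using run_in_states unfolding parity_automaton_def by blast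

lemma deterministic_trans_unique:
  assumes "parity_automaton A m" "deterministic A" "q \<in> states A"
    and "x \<in> trans A q a" "y \<in> trans A q a"
  shows "x = y"
proof -
  have "finite (trans A q a)"
    using assms(1,3) finite_subset unfolding parity_automaton_def by metis
  moreover have "card (trans A q a) \<le> Suc 0"
    using assms(2,3) unfolding deterministic_def by simp
  ultimately show ?thesis
    using card_le_Suc0_iff_eq assms(4,5) by blast
qed

lemma deterministic_run_periodic_from:
  assumes A: "parity_automaton A m" "deterministic A" and run: "is_run A w r"
    and w: "periodic_from t0 P w" and loop: "r (t0 + P) = r t0"
  shows "periodic_from t0 P r"
proof -
  have shift: "r (t0 + d + P) = r (t0 + d)" for d
  proof (induction d)
    case (Suc d)
    have "w (t0 + d + P) = w (t0 + d)"
      using w unfolding periodic_from_def by simp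
    then have "r (Suc (t0 + d + P)) \<in> trans A (r (t0 + d)) (w (t0 + d))"
      using run Suc.IH unfolding is_run_def by metis
    moreover have "r (Suc (t0 + d)) \<in> trans A (r (t0 + d)) (w (t0 + d))"
      using run unfolding is_run_def by blast
    ultimately show ?case
      using deterministic_trans_unique[OF A run_in_states[OF A(1) run]] by simp
  qed (simp add: loop)
  show ?thesis
    unfolding periodic_from_def
  proof (intro allI impI)
    fix i
    assume "t0 \<le> i"
    then obtain d where "i = t0 + d"
      using le_Suc_ex by blast
    then show "r (i + P) = r i"
      using shift[of d] by simp
  qed
qed

lemma nonempty_states_if_deterministic:
  assumes "parity_automaton A m" "deterministic A"
  shows "states A \<noteq> {}"
proof -
  have "init A \<noteq> {}"
    using assms(2) unfolding deterministic_def by force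
  then show ?thesis
    using assms(1) unfolding parity_automaton_def by blast
qed

lemma pigeonhole_upto_card:
  assumes "finite S" "f ` {0..card S} \<subseteq> S"
  obtains i j where "i < j" "j \<le> card S" "f i = f j"
proof -
  have "card (f ` {0..card S}) \<le> card S"
    using card_mono[OF assms] .
  then have "card (f ` {0..card S}) < card {0..card S}"
    by simp
  then have "\<not> inj_on f {0..card S}"
    by (rule pigeonhole)
  then obtain x y where xy: "x \<in> {0..card S}" "y \<in> {0..card S}" "x \<noteq> y" "f x = f y"
    unfolding inj_on_def by blast
  show ?thesis
  proof (cases "x < y")
    case True
    then show ?thesis
      using that[of x y] xy by simp
  next
    case False
    then show ?thesis
      using that[of y x] xy by simp
  qed
qed

lemma lasso_run_periodic_from:
  assumes A: "parity_automaton A m" "deterministic A" and run: "is_run A (u \<frown> v\<^sup>\<omega>) r"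
    and v: "v \<noteq> []"
  shows "\<exists>t0 P. 0 < P \<and> t0 + P \<le> length u + card (states A) * length v \<and> periodic_from t0 P r"
proof -
  have "finite (states A)"
    using A(1) unfolding parity_automaton_def by blast
  moreover have "(\<lambda>i. r (length u + i * length v)) ` {0..card (states A)} \<subseteq> states A"
    using run_in_states[OF A(1) run] by blast
  ultimately obtain i j where ij: "i < j" "j \<le> card (states A)"
    and loop: "r (length u + i * length v) = r (length u + j * length v)"
    by (rule pigeonhole_upto_card)
  define t0 where "t0 = length u + i * length v"
  define P where "P = (j - i) * length v"
  have "i * length v \<le> j * length v"
    using ij(1) by simp
  then have end_eq: "t0 + P = length u + j * length v"
    unfolding t0_def P_def by (simp add: diff_mult_distrib)
  have "periodic_from t0 P (u \<frown> v\<^sup>\<omega>)"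
    unfolding P_def by (rule periodic_from_mult_period[OF periodic_from_lasso[OF v]]) (simp add: t0_def)
  moreover have "r (t0 + P) = r t0"
    unfolding end_eq using loop by (simp add: t0_def)
  ultimately have "periodic_from t0 P r"
    by (rule deterministic_run_periodic_from[OF A run])
  moreover have "0 < P"
    unfolding P_def using ij(1) v by simp
  moreover have "t0 + P \<le> length u + card (states A) * length v"
    unfolding end_eq using ij(2) by simp
  ultimately show ?thesis
    by blast
qed

section \<open>The window monitor\<close>

locale window_monitor =
  fixes L top e :: nat
  assumes L_pos: "0 < L" and e_less_top: "e < top" and even_e: "even e"
begin

fun window_step :: "nat \<times> nat \<Rightarrow> nat \<Rightarrow> nat \<times> nat" where
  "window_step (k, v) c = (if Suc k < L then (Suc k, max v c) else (0, max e c))"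

text \<open>
  The value \<open>top\<close>, the largest colour, marks the first window, which may contain
  the transient part of a run and is never checked. When \<open>top\<close> is odd it is forbidden
  after the first window, so that the mark stays unambiguous.
\<close>

fun window_alarm :: "nat \<times> nat \<Rightarrow> nat \<Rightarrow> bool" where
  "window_alarm (k, v) c \<longleftrightarrow>
     (if Suc k < L then odd top \<and> c = top \<and> v \<noteq> top
      else (odd v \<and> v \<noteq> top) \<or> (odd top \<and> c = top))"

primrec window_state :: "(nat \<Rightarrow> nat) \<Rightarrow> nat \<Rightarrow> nat \<times> nat" where
  "window_state cs 0 = (0, top)"
| "window_state cs (Suc t) = window_step (window_state cs t) (cs (Suc t))"

definition alarm_free :: "(nat \<Rightarrow> nat) \<Rightarrow> bool" where
  "alarm_free cs \<longleftrightarrow> (\<forall>t. \<not> window_alarm (window_state cs t) (cs (Suc t)))"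

lemma window_state_pos: "fst (window_state cs t) = t mod L"
proof (induction t)
  case (Suc t)
  obtain v where "window_state cs t = (t mod L, v)"
    using Suc.IH by (cases "window_state cs t") auto
  then show ?case
    using mod_less_divisor[OF L_pos, of t] by (auto simp: mod_Suc)
qed simp

lemma window_state_eq: "window_state cs t = (t mod L, snd (window_state cs t))"
  by (simp add: prod_eq_iff window_state_pos)

lemma window_state_Suc:
  "window_state cs (Suc t) = window_step (t mod L, snd (window_state cs t)) (cs (Suc t))"
  by (metis window_state.simps(2) window_state_eq)

lemma window_state_first_window:
  assumes "\<And>i. cs i \<le> top" "t < L"
  shows "snd (window_state cs t) = top"
  using assms(2)
proof (induction t)
  case (Suc t)
  then have "Suc (t mod L) < L"
    by simp
  then show ?case
    using Suc assms(1)[of "Suc t"] unfolding window_state_Suc by (simp add: max_absorb1)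
qed simp

lemma window_state_later_window:
  assumes "\<And>i. cs i \<le> top" "L \<le> t"
  shows "snd (window_state cs t) = max e (Max (cs ` {t - t mod L..t}))"
  using assms(2)
proof (induction t)
  case 0
  then show ?case
    using L_pos by simp
next
  case (Suc t)
  show ?case
  proof (cases "Suc (t mod L) < L")
    case True
    then have "L \<le> t"
      using Suc.prems by (cases "t < L") simp_all
    define a where "a = t - t mod L"
    have start: "Suc t - Suc t mod L = a"
      using True unfolding a_def by (simp add: mod_Suc)
    have "a \<le> t"
      unfolding a_def by simp
    then have "Max (cs ` {a..Suc t}) = max (cs (Suc t)) (Max (cs ` {a..t}))"
      by (simp add: atLeastAtMostSuc_conv)
    moreover have "snd (window_state cs (Suc t)) = max (max e (Max (cs ` {a..t}))) (cs (Suc t))"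
      using Suc.IH[OF \<open>L \<le> t\<close>] True unfolding a_def window_state_Suc by simp
    ultimately show ?thesis
      unfolding start by (metis max.assoc max.commute)
  next
    case False
    then have "Suc t mod L = 0"
      using mod_less_divisor[OF L_pos, of t] by (simp add: mod_Suc)
    then show ?thesis
      using False unfolding window_state_Suc by simp
  qed
qed

lemma window_end_value:
  assumes "\<And>i. cs i \<le> top"
  shows "snd (window_state cs (q * L + (L - 1))) =
           (if q = 0 then top else max e (Max (cs ` {q * L..q * L + (L - 1)})))"
proof (cases "q = 0")
  case True
  then show ?thesis
    using window_state_first_window[OF assms] L_pos by simp
next
  case False
  have "(q * L + (L - 1)) mod L = (L - 1) mod L"
    by (rule mod_mult_self3)
  then have "(q * L + (L - 1)) mod L = L - 1"
    using L_pos by simp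
  moreover have "L \<le> q * L + (L - 1)"
    using False by (simp add: trans_le_add1)
  ultimately show ?thesis
    using window_state_later_window[OF assms] False by simp
qed

lemma window_value_ne_top:
  assumes "alarm_free cs" "odd top" "L \<le> t"
  shows "snd (window_state cs t) \<noteq> top"
  using assms(3)
proof (induction t)
  case 0
  then show ?case
    using L_pos by simp
next
  case (Suc t)
  define v where "v = snd (window_state cs t)"
  have "\<not> window_alarm (window_state cs t) (cs (Suc t))"
    using assms(1) unfolding alarm_free_def by blast
  then have no_alarm: "\<not> window_alarm (t mod L, v) (cs (Suc t))"
    unfolding v_def by (subst (asm) window_state_eq)
  have state: "window_state cs (Suc t) = window_step (t mod L, v) (cs (Suc t))"
    unfolding v_def by (rule window_state_Suc)
  show ?case
  proof (cases "Suc (t mod L) < L")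
    case True
    then have "L \<le> t"
      using Suc.prems by (cases "t < L") simp_all
    then have "v \<noteq> top"
      using Suc.IH unfolding v_def by blast
    then show ?thesis
      using True no_alarm assms(2) unfolding state by (auto simp: max_def)
  next
    case False
    then show ?thesis
      using no_alarm assms(2) e_less_top unfolding state by (auto simp: max_def)
  qed
qed

lemma alarm_free_window_end_even:
  assumes "alarm_free cs" "0 < q"
  shows "even (snd (window_state cs (q * L + (L - 1))))"
proof (rule ccontr)
  define te where "te = q * L + (L - 1)"
  define v where "v = snd (window_state cs te)"
  assume "odd (snd (window_state cs (q * L + (L - 1))))"
  then have "odd v"
    unfolding v_def te_def .
  have "te mod L = (L - 1) mod L"
    unfolding te_def by (rule mod_mult_self3)
  then have state: "window_state cs te = (L - 1, v)"
    using window_state_eq[of cs te] L_pos unfolding v_def by simp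
  have "\<not> window_alarm (window_state cs te) (cs (Suc te))"
    using assms(1) unfolding alarm_free_def by blast
  then have "v = top"
    using L_pos \<open>odd v\<close> unfolding state by simp
  have "L \<le> q * L"
    using assms(2) by simp
  then have "L \<le> te"
    unfolding te_def by linarith
  then show False
    using window_value_ne_top[OF assms(1) _ \<open>L \<le> te\<close>] \<open>odd v\<close> \<open>v = top\<close>
    unfolding v_def by simp
qed

lemma alarm_free_sound:
  assumes bounded: "\<And>i. cs i \<le> top" and "alarm_free cs" and "e < Max (limit cs)"
  shows "even (Max (limit cs))"
proof -
  define c where "c = Max (limit cs)"
  have fin: "finite (range cs)"
    using bounded by (rule finite_range_bounded)
  obtain k where late: "\<And>i. k \<le> i \<Longrightarrow> cs i \<in> limit cs"
    using eventually_in_limit[OF fin] by blast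
  have "\<exists>\<^sub>\<infinity>i. cs i = c"
    using Max_limit_in[OF fin] unfolding c_def limit_iff_frequent .
  then obtain t where t: "k + L \<le> t" "cs t = c"
    unfolding INFM_nat_le by blast
  define q where "q = t div L"
  have "t = q * L + t mod L" "t mod L < L"
    unfolding q_def using L_pos by simp_all
  then have window: "q * L \<le> t" "t \<le> q * L + (L - 1)" "k \<le> q * L"
    using t(1) by linarith+
  have "0 < q"
    using \<open>k + L \<le> t\<close> window(2) L_pos by (cases "q = 0") auto
  have "Max (cs ` {q * L..q * L + (L - 1)}) = c"
  proof (rule Max_eqI)
    show "c \<in> cs ` {q * L..q * L + (L - 1)}"
      using window t(2) by auto
  next
    fix x
    assume "x \<in> cs ` {q * L..q * L + (L - 1)}"
    then show "x \<le> c"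
      unfolding c_def using late window(3) finite_limit[OF fin] by auto
  qed simp
  then have "even (max e c)"
    using alarm_free_window_end_even[OF assms(2) \<open>0 < q\<close>] window_end_value[OF bounded] \<open>0 < q\<close>
    by simp
  then show ?thesis
    using assms(3) unfolding c_def by simp
qed

lemma periodic_window_end_value:
  assumes bounded: "\<And>i. cs i \<le> top"
    and periodic: "periodic_from t0 P cs" "0 < P" "t0 + P \<le> L" and "0 < q"
  shows "snd (window_state cs (q * L + (L - 1))) = max e (Max (limit cs))"
proof -
  define a where "a = q * L"
  have "L \<le> a"
    unfolding a_def using \<open>0 < q\<close> by simp
  then have "t0 \<le> a"
    using periodic(3) by linarith
  have "limit cs = cs ` {a..<a + P}"
    by (rule limit_periodic_from[OF periodic(1,2) \<open>t0 \<le> a\<close>])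
  also have "\<dots> \<subseteq> cs ` {a..a + (L - 1)}"
    using periodic(3) by (intro image_mono) auto
  finally have "cs ` {a..a + (L - 1)} = limit cs"
    using periodic_from_in_limit[OF periodic(1,2)] \<open>t0 \<le> a\<close> by auto
  then show ?thesis
    using window_end_value[OF bounded] \<open>0 < q\<close> unfolding a_def by simp
qed

lemma periodic_from_alarm_free:
  assumes bounded: "\<And>i. cs i \<le> top"
    and periodic: "periodic_from t0 P cs" "0 < P" "t0 + P \<le> L"
    and even: "even (Max (limit cs))"
  shows "alarm_free cs"
  unfolding alarm_free_def
proof
  fix t
  define v where "v = snd (window_state cs t)"
  have top_ok: "\<not> (odd top \<and> cs (Suc t) = top \<and> (v \<noteq> top \<or> \<not> Suc (t mod L) < L))"
  proof (cases "t0 \<le> Suc t")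
    case True
    have "cs (Suc t) \<le> Max (limit cs)"
      using periodic_from_in_limit[OF periodic(1,2) True] finite_limit[OF finite_range_bounded[OF bounded]]
      by simp
    moreover have "Max (limit cs) \<le> top"
      using bounded by (rule Max_limit_le)
    ultimately show ?thesis
      using even by (auto simp: le_antisym)
  next
    case False
    then have "Suc t < L"
      using periodic(3) by simp
    then show ?thesis
      using window_state_first_window[of cs t, OF bounded] unfolding v_def by simp
  qed
  have value_ok: "\<not> (odd v \<and> v \<noteq> top)" if "\<not> Suc (t mod L) < L"
  proof -
    define q where "q = t div L"
    have "t mod L = L - 1"
      using that mod_less_divisor[OF L_pos, of t] by linarith
    then have "t = q * L + (L - 1)"
      unfolding q_def using div_mult_mod_eq[of t L] by simp
    then show ?thesis
      using window_end_value[of cs q, OF bounded] periodic_window_end_value[where q = q, OF bounded periodic]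
        even even_e unfolding v_def by (cases "q = 0") (auto simp: max_def)
  qed
  have "window_state cs t = (t mod L, v)"
    unfolding v_def by (rule window_state_eq)
  then show "\<not> window_alarm (window_state cs t) (cs (Suc t))"
    using top_ok value_ok by auto
qed

section \<open>The monitored automaton\<close>

definition monitored :: "('q, 'a) pa \<Rightarrow> ('q \<times> nat \<times> nat, 'a) pa" where
  "monitored A =
     \<lparr>states = states A \<times> {..<L} \<times> {e..top},
      init = (\<lambda>q. (q, 0, top)) ` init A,
      trans = (\<lambda>(q, s) a. (\<lambda>q'. (q', window_step s (color A q'))) `
                 {q' \<in> trans A q a. \<not> window_alarm s (color A q')}),
      color = (\<lambda>(q, s). min (color A q) e)\<rparr>"

lemma init_monitored_iff: "x \<in> init (monitored A) \<longleftrightarrow> fst x \<in> init A \<and> snd x = (0, top)"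
  unfolding monitored_def by (cases x) auto

lemma trans_monitored_iff:
  "x \<in> trans (monitored A) y a \<longleftrightarrow>
     fst x \<in> trans A (fst y) a \<and> \<not> window_alarm (snd y) (color A (fst x)) \<and>
     snd x = window_step (snd y) (color A (fst x))"
  unfolding monitored_def by (cases x; cases y) auto

lemma color_monitored: "color (monitored A) x = min (color A (fst x)) e"
  unfolding monitored_def by (simp add: case_prod_beta)

lemma card_states_monitored:
  "card (states (monitored A)) = card (states A) * L * (Suc top - e)"
  unfolding monitored_def by (simp add: card_cartesian_product)

lemma window_step_in_range:
  assumes "s \<in> {..<L} \<times> {e..top}" "c \<le> top"
  shows "window_step s c \<in> {..<L} \<times> {e..top}"
  using assms L_pos by (cases s) auto

lemma parity_automaton_monitored:
  assumes A: "parity_automaton A (Suc top)" and "e < n"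
  shows "parity_automaton (monitored A) n"
  unfolding parity_automaton_def
proof (intro conjI ballI allI)
  show "finite (states (monitored A))"
    using A unfolding parity_automaton_def monitored_def by simp
  show "init (monitored A) \<subseteq> states (monitored A)"
    using A L_pos e_less_top unfolding parity_automaton_def monitored_def by auto
next
  fix x a
  assume x: "x \<in> states (monitored A)"
  show "trans (monitored A) x a \<subseteq> states (monitored A)"
  proof
    fix y
    assume "y \<in> trans (monitored A) x a"
    then have y: "fst y \<in> trans A (fst x) a" "snd y = window_step (snd x) (color A (fst y))"
      unfolding trans_monitored_iff by simp_all
    have "fst x \<in> states A" and x_window: "snd x \<in> {..<L} \<times> {e..top}"
      using x unfolding monitored_def by auto
    then have "fst y \<in> states A"
      using y(1) A unfolding parity_automaton_def by blast
    then have "color A (fst y) \<le> top"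
      using A unfolding parity_automaton_def by (simp add: less_Suc_eq_le)
    then have "snd y \<in> {..<L} \<times> {e..top}"
      unfolding y(2) using x_window by (rule window_step_in_range[rotated])
    with \<open>fst y \<in> states A\<close> show "y \<in> states (monitored A)"
      unfolding monitored_def by (simp add: mem_Times_iff)
  qed
next
  fix x
  show "color (monitored A) x < n"
    unfolding color_monitored using assms(2) by simp
qed

lemma deterministic_monitored:
  assumes A: "parity_automaton A m" "deterministic A"
  shows "deterministic (monitored A)"
  unfolding deterministic_def
proof (intro conjI ballI allI)
  have "inj_on (\<lambda>q. (q, 0, top)) (init A)"
    by (rule inj_onI) simp
  then have "card (init (monitored A)) = card (init A)"
    unfolding monitored_def using card_image by simp
  then show "card (init (monitored A)) = 1"
    using A(2) unfolding deterministic_def by simp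
next
  fix x a
  assume "x \<in> states (monitored A)"
  then have q: "fst x \<in> states A"
    unfolding monitored_def by auto
  then have fin: "finite (trans A (fst x) a)"
    using A(1) finite_subset unfolding parity_automaton_def by metis
  have "trans (monitored A) x a \<subseteq> (\<lambda>q'. (q', window_step (snd x) (color A q'))) ` trans A (fst x) a"
    unfolding monitored_def by (auto simp: case_prod_beta)
  then have "card (trans (monitored A) x a) \<le> card (trans A (fst x) a)"
    using fin by (meson card_image_le card_mono finite_imageI le_trans)
  also have "\<dots> \<le> 1"
    using A(2) q unfolding deterministic_def by simp
  finally show "card (trans (monitored A) x a) \<le> 1" .
qed

lemma is_run_monitoredD:
  assumes "is_run (monitored A) w s"
  shows "is_run A w (fst \<circ> s)" "alarm_free (color A \<circ> fst \<circ> s)"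
proof -
  let ?cs = "color A \<circ> fst \<circ> s"
  have init: "fst (s 0) \<in> init A" "snd (s 0) = (0, top)"
    using assms init_monitored_iff unfolding is_run_def by blast+
  have "s (Suc t) \<in> trans (monitored A) (s t) (w t)" for t
    using assms unfolding is_run_def by blast
  then have step: "fst (s (Suc t)) \<in> trans A (fst (s t)) (w t)"
    "\<not> window_alarm (snd (s t)) (?cs (Suc t))"
    "snd (s (Suc t)) = window_step (snd (s t)) (?cs (Suc t))" for t
    unfolding trans_monitored_iff by simp_all
  show "is_run A w (fst \<circ> s)"
    unfolding is_run_def using init step by simp
  have "snd (s t) = window_state ?cs t" for t
    by (induction t) (simp_all add: init step)
  then show "alarm_free ?cs"
    unfolding alarm_free_def using step(2) by metis
qed

lemma is_run_monitoredI:
  assumes "is_run A w r" "alarm_free (color A \<circ> r)"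
  shows "is_run (monitored A) w (\<lambda>t. (r t, window_state (color A \<circ> r) t))"
  using assms unfolding is_run_def alarm_free_def by (simp add: init_monitored_iff trans_monitored_iff)

lemma accepting_monitored_iff:
  assumes "finite (range (color A \<circ> fst \<circ> s))"
  shows "accepting (monitored A) s \<longleftrightarrow> even (min (Max (limit (color A \<circ> fst \<circ> s))) e)"
proof -
  have "color (monitored A) \<circ> s = (\<lambda>c. min c e) \<circ> (color A \<circ> fst \<circ> s)"
    by (auto simp: color_monitored)
  moreover have "mono (\<lambda>c::nat. min c e)"
    by (rule monoI) simp
  ultimately have "Max (limit (color (monitored A) \<circ> s)) = min (Max (limit (color A \<circ> fst \<circ> s))) e"
    using Max_limit_comp_mono[OF assms] by simp
  then show ?thesis
    unfolding accepting_iff_Max_limit by simp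
qed

lemma lang_monitored_subset:
  assumes A: "parity_automaton A (Suc top)"
  shows "lang (monitored A) \<subseteq> lang A"
proof
  fix w
  assume "w \<in> lang (monitored A)"
  then obtain s where s: "is_run (monitored A) w s" "accepting (monitored A) s"
    unfolding lang_def by blast
  let ?cs = "color A \<circ> fst \<circ> s"
  have run: "is_run A w (fst \<circ> s)" and "alarm_free ?cs"
    using is_run_monitoredD[OF s(1)] by simp_all
  have bounded: "?cs i \<le> top" for i
    using run_color_less[OF A run] by (simp add: less_Suc_eq_le)
  have "even (min (Max (limit ?cs)) e)"
    using s(2) accepting_monitored_iff[OF finite_range_bounded] bounded by blast
  then have "even (Max (limit ?cs))"
    using alarm_free_sound[OF bounded \<open>alarm_free ?cs\<close>] by (cases "Max (limit ?cs) \<le> e") auto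
  then show "w \<in> lang A"
    using run unfolding lang_def accepting_iff_Max_limit by (auto simp: comp_assoc)
qed

lemma periodic_run_in_lang_monitored:
  assumes A: "parity_automaton A (Suc top)" and run: "is_run A w r" and acc: "accepting A r"
    and periodic: "periodic_from t0 P r" "0 < P" "t0 + P \<le> L"
  shows "w \<in> lang (monitored A)"
proof -
  let ?cs = "color A \<circ> r"
  have bounded: "?cs i \<le> top" for i
    using run_color_less[OF A run] by (simp add: less_Suc_eq_le)
  have even: "even (Max (limit ?cs))"
    using acc unfolding accepting_iff_Max_limit .
  have "alarm_free ?cs"
    using periodic_from_alarm_free[where cs = ?cs] bounded periodic_from_comp[OF periodic(1)]
      periodic(2,3) even by blast
  then have "is_run (monitored A) w (\<lambda>t. (r t, window_state ?cs t))"
    by (rule is_run_monitoredI[OF run])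
  moreover have "accepting (monitored A) (\<lambda>t. (r t, window_state ?cs t))"
    using accepting_monitored_iff[of A] finite_range_bounded[OF bounded] even even_e
    by (simp add: comp_def min_def)
  ultimately show ?thesis
    unfolding lang_def by blast
qed

lemma lasso_lang_subset_monitored:
  assumes A: "parity_automaton A (Suc top)" "deterministic A"
    and "n * card (states A) < L"
  shows "lasso_lang n (lang A) \<subseteq> lang (monitored A)"
proof
  fix w
  assume "w \<in> lasso_lang n (lang A)"
  then obtain u v where "w \<in> lang A" "v \<noteq> []" "length (u @ v) = n" and w: "w = u \<frown> v\<^sup>\<omega>"
    unfolding lasso_lang_def by blast
  then obtain r where run: "is_run A w r" and acc: "accepting A r"
    unfolding lang_def by blast
  obtain t0 P where "0 < P" and t0_P: "t0 + P \<le> length u + card (states A) * length v"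
    and periodic: "periodic_from t0 P r"
    using lasso_run_periodic_from[OF A run[unfolded w] \<open>v \<noteq> []\<close>] by blast
  have "0 < card (states A)"
    using A nonempty_states_if_deterministic card_gt_0_iff unfolding parity_automaton_def by blast
  then have "length u + card (states A) * length v \<le> (length u + length v) * card (states A)"
    by (simp add: add_mult_distrib)
  then have "t0 + P \<le> L"
    using t0_P assms(3) \<open>length (u @ v) = n\<close> by simp
  then show "w \<in> lang (monitored A)"
    using periodic_run_in_lang_monitored[OF A(1) run acc periodic \<open>0 < P\<close>] by blast
qed

end

section \<open>Copies with natural-number states\<close>

lemma lang_subset_if_simulation:
  assumes R: "init A \<subseteq> R" "\<And>x a. x \<in> R \<Longrightarrow> trans A x a \<subseteq> R"
    and init: "h ` init A \<subseteq> init B"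
    and trans: "\<And>x a. x \<in> R \<Longrightarrow> h ` trans A x a \<subseteq> trans B (h x) a"
    and color: "\<And>x. x \<in> R \<Longrightarrow> color B (h x) = color A x"
  shows "lang A \<subseteq> lang B"
proof
  fix w
  assume "w \<in> lang A"
  then obtain r where r: "is_run A w r" "accepting A r"
    unfolding lang_def by blast
  have in_R: "r i \<in> R" for i
  proof (induction i)
    case 0
    then show ?case
      using r(1) R(1) unfolding is_run_def by blast
  next
    case (Suc i)
    then show ?case
      using r(1) R(2) unfolding is_run_def by blast
  qed
  have "is_run B w (h \<circ> r)"
    using r(1) init trans[OF in_R] unfolding is_run_def by (simp add: image_subset_iff)
  moreover have "color B \<circ> (h \<circ> r) = color A \<circ> r"
    by (simp add: fun_eq_iff color[OF in_R])
  then have "accepting B (h \<circ> r)"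
    using r(2) unfolding accepting_iff_Max_limit by simp
  ultimately show "w \<in> lang B"
    unfolding lang_def by blast
qed

definition nat_copy :: "('q \<Rightarrow> nat) \<Rightarrow> nat \<Rightarrow> ('q, 'a) pa \<Rightarrow> (nat, 'a) pa" where
  "nat_copy f N B =
     \<lparr>states = {..<N}, init = f ` init B,
      trans = (\<lambda>x a. if x \<in> f ` states B then f ` trans B (inv_into (states B) f x) a else {}),
      color = (\<lambda>x. if x \<in> f ` states B then color B (inv_into (states B) f x) else 0)\<rparr>"

lemma nat_copy_at_image:
  assumes "inj_on f (states B)" "q \<in> states B"
  shows "trans (nat_copy f N B) (f q) a = f ` trans B q a"
    and "color (nat_copy f N B) (f q) = color B q"
  using assms by (simp_all add: nat_copy_def)

lemma parity_automaton_nat_copy: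
  assumes B: "parity_automaton B k" and "0 < k" and "f ` states B \<subseteq> {..<N}"
  shows "parity_automaton (nat_copy f N B) k"
  unfolding parity_automaton_def
proof (intro conjI ballI allI)
  show "finite (states (nat_copy f N B))"
    by (simp add: nat_copy_def)
  show "init (nat_copy f N B) \<subseteq> states (nat_copy f N B)"
    using B assms(3) unfolding parity_automaton_def nat_copy_def by auto
next
  fix x a
  have inv: "inv_into (states B) f x \<in> states B" if "x \<in> f ` states B"
    using that by (rule inv_into_into)
  show "trans (nat_copy f N B) x a \<subseteq> states (nat_copy f N B)"
  proof (cases "x \<in> f ` states B")
    case True
    then have "trans B (inv_into (states B) f x) a \<subseteq> states B"
      using B inv unfolding parity_automaton_def by blast
    then have "f ` trans B (inv_into (states B) f x) a \<subseteq> {..<N}"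
      using assms(3) by blast
    then show ?thesis
      using True by (simp add: nat_copy_def)
  qed (simp add: nat_copy_def)
  show "color (nat_copy f N B) x < k"
    using B assms(2) inv unfolding parity_automaton_def nat_copy_def by auto
qed

lemma deterministic_nat_copy:
  assumes B: "parity_automaton B k" "deterministic B" and inj: "inj_on f (states B)"
  shows "deterministic (nat_copy f N B)"
  unfolding deterministic_def
proof (intro conjI ballI allI)
  have "init B \<subseteq> states B"
    using B(1) unfolding parity_automaton_def by blast
  then have "card (f ` init B) = card (init B)"
    using card_image inj_on_subset[OF inj] by blast
  then show "card (init (nat_copy f N B)) = 1"
    using B(2) unfolding deterministic_def nat_copy_def by simp
next
  fix x a
  show "card (trans (nat_copy f N B) x a) \<le> 1"
  proof (cases "x \<in> f ` states B")
    case True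
    then obtain q where q: "q \<in> states B" "x = f q"
      by blast
    then have "trans B q a \<subseteq> states B"
      using B(1) unfolding parity_automaton_def by blast
    then have "card (f ` trans B q a) = card (trans B q a)"
      using card_image inj_on_subset[OF inj] by blast
    then show ?thesis
      using B(2) q nat_copy_at_image[OF inj] unfolding deterministic_def by simp
  qed (simp add: nat_copy_def)
qed

lemma lang_nat_copy:
  assumes B: "parity_automaton B k" and inj: "inj_on f (states B)"
  shows "lang (nat_copy f N B) = lang B"
proof
  have init_B: "init B \<subseteq> states B" and trans_B: "\<And>q a. q \<in> states B \<Longrightarrow> trans B q a \<subseteq> states B"
    using B unfolding parity_automaton_def by blast+
  show "lang (nat_copy f N B) \<subseteq> lang B"
  proof (rule lang_subset_if_simulation[where R = "f ` states B" and h = "inv_into (states B) f"])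
    show "init (nat_copy f N B) \<subseteq> f ` states B"
      using init_B by (auto simp: nat_copy_def)
    show "inv_into (states B) f ` init (nat_copy f N B) \<subseteq> init B"
      using init_B inv_into_f_f[OF inj] by (auto simp: nat_copy_def)
  next
    fix x a
    assume "x \<in> f ` states B"
    then obtain q where q: "q \<in> states B" "x = f q"
      by blast
    have trans_x: "trans (nat_copy f N B) x a = f ` trans B q a"
      unfolding q(2) using nat_copy_at_image(1)[OF inj q(1)] .
    show "trans (nat_copy f N B) x a \<subseteq> f ` states B"
      unfolding trans_x using trans_B[OF q(1)] by (rule image_mono)
    show "inv_into (states B) f ` trans (nat_copy f N B) x a
        \<subseteq> trans B (inv_into (states B) f x) a"
      unfolding trans_x using inv_into_image_cancel[OF inj trans_B[OF q(1)]] inv_into_f_f[OF inj q(1)] q(2)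
      by simp
    show "color B (inv_into (states B) f x) = color (nat_copy f N B) x"
      using q inv_into_f_f[OF inj] nat_copy_at_image[OF inj] by simp
  qed
  show "lang B \<subseteq> lang (nat_copy f N B)"
    by (rule lang_subset_if_simulation[where R = "states B" and h = f])
      (use init_B trans_B nat_copy_at_image[OF inj] in \<open>auto simp: nat_copy_def\<close>)
qed

lemma ex_nat_automaton_card:
  fixes B :: "('q, 'a) pa"
  assumes B: "parity_automaton B k" and "0 < k" and "card (states B) \<le> N"
  shows "\<exists>A :: (nat, 'a) pa. parity_automaton A k \<and> (deterministic B \<longrightarrow> deterministic A) \<and>
           card (states A) = N \<and> lang A = lang B"
proof -
  have "finite (states B)"
    using B unfolding parity_automaton_def by blast
  then obtain f where f: "bij_betw f (states B) {0..<card (states B)}"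
    using ex_bij_betw_finite_nat by blast
  then have inj: "inj_on f (states B)" and "f ` states B \<subseteq> {..<N}"
    using assms(3) by (auto simp: bij_betw_def)
  then show ?thesis
    using parity_automaton_nat_copy[OF B assms(2)] deterministic_nat_copy[OF B _ inj]
      lang_nat_copy[OF B inj] by (intro exI[of _ "nat_copy f N B"]) (simp add: nat_copy_def)
qed

lemma even_floor_bounds:
  fixes k :: nat
  shows "2 * (k div 2) \<le> k" "k \<le> 2 * (k div 2) + 1"
proof -
  have "2 * (k div 2) + k mod 2 = k" "k mod 2 < 2"
    by simp_all
  then show "2 * (k div 2) \<le> k" "k \<le> 2 * (k div 2) + 1"
    by linarith+
qed

theorem theorem6:
  fixes A :: "('q, 'a::finite) pa" and m m' n :: nat
  assumes "parity_automaton A m" and "deterministic A"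
    and "0 < m'" and "m' < m"
  shows "\<exists>A' :: (nat, 'a) pa.
           parity_automaton A' m' \<and> deterministic A' \<and>
           card (states A') = (n * card (states A) + 1) * card (states A) * (m - m' + 2) \<and>
           lang A' \<subseteq> lang A \<and>
           lasso_lang n (lang A') = lasso_lang n (lang A)"
proof -
  define e where "e = 2 * ((m' - 1) div 2)"
  have "e < m'" "m' \<le> e + 2"
    using even_floor_bounds[of "m' - 1"] assms(3) unfolding e_def by linarith+
  interpret window_monitor "n * card (states A) + 1" "m - 1" e
    using \<open>e < m'\<close> assms(4) by unfold_locales (auto simp: e_def)
  have A: "parity_automaton A (Suc (m - 1))"
    using assms(1,4) by simp
  have "card (states (monitored A)) \<le> (n * card (states A) + 1) * card (states A) * (m - m' + 2)"
    unfolding card_states_monitored mult.commute[of "card (states A)" "n * card (states A) + 1"]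
    using \<open>m' \<le> e + 2\<close> assms(4) by (intro mult_le_mono2) linarith
  then obtain A' :: "(nat, 'a) pa" where A': "parity_automaton A' m'"
    "deterministic (monitored A) \<longrightarrow> deterministic A'"
    "card (states A') = (n * card (states A) + 1) * card (states A) * (m - m' + 2)"
    and lang_A': "lang A' = lang (monitored A)"
    using ex_nat_automaton_card[OF parity_automaton_monitored[OF A \<open>e < m'\<close>] assms(3)] by blast
  have "lang A' \<subseteq> lang A"
    unfolding lang_A' by (rule lang_monitored_subset[OF A])
  moreover have "lasso_lang n (lang A) \<subseteq> lang A'"
    unfolding lang_A' by (rule lasso_lang_subset_monitored[OF A assms(2)]) simp
  ultimately show ?thesis
    using A' deterministic_monitored[OF assms(1,2)] unfolding lasso_lang_def by blast
qed

end
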